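(* Let $\kappa_0,\kappa_{-1},\kappa_2,\kappa_3>0$ and $j\in\mathbb N$. Consider the continuous-time Markov chain on $\mathbb N_0$ of the mass-action reaction network $\varnothing\rightleftharpoons S$ (rates $\kappa_0$, $\kappa_{-1}$), $3S\to2S$ (rate $\kappa_3$), $2S\to(2+j)S$ (rate $\kappa_2$), i.e. with transitions $x\to x+1$ at rate $\kappa_0$, $x\to x-1$ at rate $\kappa_{-1}x+\kappa_3x(x-1)(x-2)$, and $x\to x+j$ at rate $\kappa_2x(x-1)$ (when $j=1$ the last two upward rates add). Then every stationary distribution $\pi$ of this chain satisfies $\pi\in\mathcal P^{1+}_{1/j}\cap\mathcal P^{1-}_{1}$.
   Context: A stationary distribution is a probability measure $\pi$ on $\mathbb N_0$ satisfying the master equation $0=\sum_{\omega}\lambda_\omega(x-\omega)\pi(x-\omega)-\sum_\omega\lambda_\omega(x)\pi(x)$ for all $x$, where $\lambda_\omega(x)$ is the rate of $x\to x+\omega$ (zero at negative arguments). $T_\pi(x)=\sum_{y\ge x}\pi(y)$. For non-negative $f,g$, $f\lesssim g$ (equivalently $g\gtrsim f$) means there are $C,N>0$ with $f(x)\le Cg(x)$ for all $x\ge N$; $\exp(-h(x)(1+o(1)))$ means $\exp(-h(x)(1+\epsilon(x)))$ for some $\epsilon(x)\to0$. $\mathcal P^{1+}_a$ ($a>0$) is the set of probability distributions $\pi$ with $T_\pi(x)\lesssim\exp(-ax\log x(1+o(1)))$, and $\mathcal P^{1-}_a$ those with $T_\pi(x)\gtrsim\exp(-ax\log x(1+o(1)))$.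 *)

theory Defs
  imports Complex_Main
begin

text \<open>Transition rates of the mass-action chain on the states 0,1,2,...
  (arguments as integers so that rates at negative arguments are zero).
  crn_rate k0 km1 k2 k3 j w y is the rate of y to y + w.  When j = 1 the two
  upward rates add.\<close>
definition crn_rate :: "real \<Rightarrow> real \<Rightarrow> real \<Rightarrow> real \<Rightarrow> nat \<Rightarrow> int \<Rightarrow> int \<Rightarrow> real" where
  "crn_rate k0 km1 k2 k3 j w y =
     (if y < 0 then 0 else
        (if w = 1 then k0 else 0)
      + (if w = -1 then km1 * of_int y + k3 * of_int y * of_int (y - 1) * of_int (y - 2) else 0)
      + (if w = int j then k2 * of_int y * of_int (y - 1) else 0))"

definition crn_jumps :: "nat \<Rightarrow> int set" where
  "crn_jumps j = {1, -1, int j}"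

definition ext0 :: "(nat \<Rightarrow> real) \<Rightarrow> int \<Rightarrow> real" where
  "ext0 p y = (if y < 0 then 0 else p (nat y))"

definition prob_dist :: "(nat \<Rightarrow> real) \<Rightarrow> bool" where
  "prob_dist p \<longleftrightarrow> (\<forall>x. 0 \<le> p x) \<and> p sums 1"

definition stationary ::
  "(int \<Rightarrow> int \<Rightarrow> real) \<Rightarrow> int set \<Rightarrow> (nat \<Rightarrow> real) \<Rightarrow> bool" where
  "stationary lam Om p \<longleftrightarrow> prob_dist p \<and>
     (\<forall>x::nat. (\<Sum>w\<in>Om. lam w (int x - w) * ext0 p (int x - w))
              - (\<Sum>w\<in>Om. lam w (int x)) * p x = 0)"

definition tailT :: "(nat \<Rightarrow> real) \<Rightarrow> nat \<Rightarrow> real" where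
  "tailT p x = (\<Sum>k. p (x + k))"

definition lesssim :: "(nat \<Rightarrow> real) \<Rightarrow> (nat \<Rightarrow> real) \<Rightarrow> bool" where
  "lesssim f g \<longleftrightarrow> (\<exists>C>0. \<exists>N>0. \<forall>x::nat. real x \<ge> N \<longrightarrow> f x \<le> C * g x)"

definition P1plus :: "real \<Rightarrow> (nat \<Rightarrow> real) \<Rightarrow> bool" where
  "P1plus a p \<longleftrightarrow> prob_dist p \<and>
     (\<exists>eps :: nat \<Rightarrow> real. eps \<longlonglongrightarrow> 0 \<and>
        lesssim (tailT p) (\<lambda>x. exp (- (a * real x * ln (real x) * (1 + eps x)))))"

definition P1minus :: "real \<Rightarrow> (nat \<Rightarrow> real) \<Rightarrow> bool" where
  "P1minus a p \<longleftrightarrow> prob_dist p \<and>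
     (\<exists>eps :: nat \<Rightarrow> real. eps \<longlonglongrightarrow> 0 \<and>
        lesssim (\<lambda>x. exp (- (a * real x * ln (real x) * (1 + eps x)))) (tailT p))"

end

theory Submission
  imports Defs "HOL-Real_Asymp.Real_Asymp"
begin

text \<open>Summing the master equation over 0, ..., x shows that the net probability flux across every
  cut between x and x + 1 vanishes: the downward flux, of order x^3 pi(x+1), equals the upward flux
  k0 pi(x) + sum_{i<j} k2 (x-i)(x-i-1) pi(x-i).  Keeping only the term i = 0 gives
  pi(x+1) >= (c/x) pi(x), hence pi(x) >= const (c/x)^x = exp(-x log x (1 + o(1))).  Bounding every
  term instead gives pi(x+1) <= (B/x) max_{i<j} pi(x-i): each block of j steps costs a factor B/x,
  so comparison with exp(-(x/j)(log x - L)) bounds the tail by exp(-(x/j) log x (1 + o(1))).\<close>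

section \<open>Tail bounds from ratio bounds\<close>

lemma prob_dist_nonneg: "prob_dist p \<Longrightarrow> 0 \<le> p n"
  by (simp add: prob_dist_def)

lemma prob_dist_summable: "prob_dist p \<Longrightarrow> summable p"
  by (auto simp: prob_dist_def sums_summable)

lemma prob_dist_le_1:
  assumes "prob_dist p"
  shows "p n \<le> 1"
proof -
  have "sum p {n} \<le> suminf p"
    using assms by (intro sum_le_suminf) (auto simp: prob_dist_summable prob_dist_nonneg)
  also have "suminf p = 1"
    using assms by (simp add: prob_dist_def sums_iff)
  finally show ?thesis by simp
qed

lemma summable_tail: "summable p \<Longrightarrow> summable (\<lambda>k. p (x + k))"
  for p :: "nat \<Rightarrow> real"
  using summable_ignore_initial_segment[of p x] by (simp add: add.commute)

lemma le_tailT: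
  assumes "prob_dist p"
  shows "p x \<le> tailT p x"
proof -
  have "sum (\<lambda>k. p (x + k)) {0} \<le> (\<Sum>k. p (x + k))"
    using assms by (intro sum_le_suminf)
      (auto simp: summable_tail prob_dist_summable prob_dist_nonneg)
  thus ?thesis by (simp add: tailT_def)
qed

lemma tailT_le_of_halving:
  fixes p f :: "nat \<Rightarrow> real"
  assumes "prob_dist p"
    and le: "\<And>z. x \<le> z \<Longrightarrow> p z \<le> f z"
    and half: "\<And>z. x \<le> z \<Longrightarrow> f (Suc z) \<le> f z / 2"
  shows "tailT p x \<le> 2 * f x"
proof -
  have geom: "f (x + k) \<le> f x * (1/2) ^ k" for k
  proof (induction k)
    case (Suc k)
    have "f (x + Suc k) \<le> f (x + k) / 2" using half[of "x + k"] by simp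
    also have "\<dots> \<le> f x * (1/2) ^ Suc k" using Suc by simp
    finally show ?case .
  qed simp
  have "p (x + k) \<le> f x * (1/2) ^ k" for k
    using le[of "x + k"] geom[of k] by simp
  hence "tailT p x \<le> (\<Sum>k. f x * (1/2::real) ^ k)"
    unfolding tailT_def using assms(1)
    by (intro suminf_le) (auto simp: summable_tail prob_dist_summable)
  also have "\<dots> = 2 * f x" by (simp add: suminf_mult suminf_geometric)
  finally show ?thesis .
qed

lemma ratio_lower_power:
  fixes p :: "nat \<Rightarrow> real"
  assumes nonneg: "\<And>n. 0 \<le> p n" and c: "0 < c" "c \<le> 1"
    and ratio: "\<And>x. m \<le> x \<Longrightarrow> c / (real x + 1) * p x \<le> p (Suc x)"
    and "m \<le> x"
  shows "p m * (c / real x) ^ x \<le> p x"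
  using \<open>m \<le> x\<close>
proof (induction x rule: dec_induct)
  case base
  have "(c / real m) ^ m \<le> 1"
  proof (cases "m = 0")
    case False
    hence "c / real m \<le> 1" using c by (simp add: divide_le_eq)
    thus ?thesis using c by (simp add: power_le_one)
  qed simp
  thus ?case using nonneg[of m] by (simp add: mult_left_le)
next
  case (step x)
  have "(c / (real x + 1)) ^ x \<le> (c / real x) ^ x"
    using c by (cases x) (auto intro!: power_mono frac_le)
  hence "p m * (c / (real x + 1)) ^ Suc x \<le> c / (real x + 1) * (p m * (c / real x) ^ x)"
    using c nonneg[of m] by (simp add: mult_left_mono mult.left_commute del: times_divide_eq_left)
  also have "\<dots> \<le> c / (real x + 1) * p x"
    using step.IH c by (intro mult_left_mono) auto
  also have "\<dots> \<le> p (Suc x)" using ratio step.hyps by simp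
  finally show ?case by (simp add: add.commute)
qed

lemma P1minus_of_ratio_lower_bound:
  fixes p :: "nat \<Rightarrow> real"
  assumes p: "prob_dist p" and "0 < c" and pm: "0 < p m"
    and ratio: "\<And>x. m \<le> x \<Longrightarrow> c / (real x + 1) * p x \<le> p (Suc x)"
  shows "P1minus 1 p"
proof -
  \<comment> \<open>Shrinking \<open>c\<close> to at most 1 gives \<open>(c/m)^m \<le> 1\<close>, the base case of \<open>ratio_lower_power\<close>.\<close>
  define c' where "c' = min c 1"
  have c': "0 < c'" "c' \<le> 1" using \<open>0 < c\<close> by (auto simp: c'_def)
  have "c' / (real x + 1) * p x \<le> p (Suc x)" if "m \<le> x" for x
  proof -
    have "c' / (real x + 1) * p x \<le> c / (real x + 1) * p x"
      using prob_dist_nonneg[OF p, of x] by (intro mult_right_mono divide_right_mono) (auto simp: c'_def)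
    also have "\<dots> \<le> p (Suc x)" by (rule ratio[OF that])
    finally show ?thesis .
  qed
  hence power: "p m * (c' / real x) ^ x \<le> p x" if "m \<le> x" for x
    using ratio_lower_power[of p c' m x] prob_dist_nonneg[OF p] c' that by blast
  define eps where "eps x = - ln c' / ln (real x)" for x :: nat
  have bound: "exp (- (1 * real x * ln (real x) * (1 + eps x))) \<le> 1 / p m * tailT p x"
    if "max (real m) 2 \<le> real x" for x :: nat
  proof -
    have "ln (real x) > 0" using that by simp
    hence "exp (- (1 * real x * ln (real x) * (1 + eps x))) = exp (real x * ln (c' / real x))"
      using c' that by (simp add: eps_def ln_div field_simps)
    also have "\<dots> = (c' / real x) ^ x"
      using c' that by (simp add: exp_of_nat_mult)
    also have "\<dots> \<le> p x / p m"
      using power[of x] that pm by (simp add: pos_le_divide_eq mult.commute)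
    also have "\<dots> \<le> 1 / p m * tailT p x"
      using le_tailT[OF p, of x] pm by (simp add: divide_right_mono)
    finally show ?thesis .
  qed
  have "eps \<longlonglongrightarrow> 0" unfolding eps_def by real_asymp
  moreover have "lesssim (\<lambda>x. exp (- (1 * real x * ln (real x) * (1 + eps x)))) (tailT p)"
    unfolding lesssim_def using bound pm
    by (intro exI[of _ "1 / p m"] conjI exI[of _ "max (real m) 2"]) auto
  ultimately show ?thesis using p unfolding P1minus_def by blast
qed

definition xlogx_decay :: "nat \<Rightarrow> real \<Rightarrow> nat \<Rightarrow> real" where
  "xlogx_decay j L z = exp (- (real z / real j) * (ln (real z) - L))"

lemma xlogx_decay_antimono:
  assumes "1 \<le> j" "0 < y" "L \<le> ln (real y)" "y \<le> z"
  shows "xlogx_decay j L z \<le> xlogx_decay j L y"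
proof -
  have "real y * (ln (real y) - L) \<le> real z * (ln (real z) - L)"
    using assms by (intro mult_mono) auto
  hence "real y / real j * (ln (real y) - L) \<le> real z / real j * (ln (real z) - L)"
    using assms(1) by (simp add: divide_right_mono)
  thus ?thesis by (simp add: xlogx_decay_def)
qed

lemma xlogx_decay_Suc_le_half:
  assumes "1 \<le> j" "0 < y" "L + real j * ln 2 \<le> ln (real y)"
  shows "xlogx_decay j L (Suc y) \<le> xlogx_decay j L y / 2"
proof -
  define a where "a = real y"
  have a: "0 < a" using assms by (simp add: a_def)
  have "a * ln a \<le> a * ln (a + 1)" "ln a \<le> ln (a + 1)"
    using a by (auto intro!: mult_left_mono)
  hence "real j * ln 2 \<le> (a + 1) * (ln (a + 1) - L) - a * (ln a - L)"
    using assms(3) by (simp add: a_def algebra_simps)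
  hence "ln 2 \<le> ((a + 1) * (ln (a + 1) - L) - a * (ln a - L)) / real j"
    using assms(1) by (simp add: le_divide_eq mult.commute)
  hence "- ((a + 1) / real j) * (ln (a + 1) - L) \<le> - (a / real j) * (ln a - L) - ln 2"
    by (simp add: diff_divide_distrib)
  hence "xlogx_decay j L (Suc y) \<le> exp (- (a / real j) * (ln a - L) - ln 2)"
    by (simp add: xlogx_decay_def a_def add.commute)
  also have "\<dots> = xlogx_decay j L y / 2"
    by (simp add: exp_diff xlogx_decay_def a_def)
  finally show ?thesis .
qed

text \<open>The rate factor \<open>B / (y + j)\<close> is absorbed because \<open>y (ln (y + j) - ln y) \<le> j\<close>.\<close>
lemma xlogx_decay_jump:
  assumes "1 \<le> j" "1 \<le> y" "0 < B" "ln B + 1 \<le> L"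
  shows "B / (real y + real j) * xlogx_decay j L y \<le> xlogx_decay j L (y + j)"
proof -
  define a where "a = real y"
  define J where "J = real j"
  have a: "1 \<le> a" and J: "1 \<le> J" using assms by (auto simp: a_def J_def)
  have "ln (a + J) - ln a = ln ((a + J) / a)" using a J by (simp add: ln_div)
  also have "\<dots> \<le> (a + J) / a - 1" using a J by (intro ln_le_minus_one) auto
  finally have "a / J * (ln (a + J) - ln a) \<le> 1" using a J by (simp add: field_simps)
  moreover have "(a + J) / J = a / J + 1" using J by (simp add: field_simps)
  ultimately have ineq: "ln B - ln (a + J) + - (a / J) * (ln a - L) \<le> - ((a + J) / J) * (ln (a + J) - L)"
    using assms(4) by (simp add: algebra_simps)
  have "B / (a + J) * exp (- (a / J) * (ln a - L)) = exp (ln B - ln (a + J) + - (a / J) * (ln a - L))"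
    unfolding exp_add exp_diff using assms(3) a J by simp
  also have "\<dots> \<le> exp (- ((a + J) / J) * (ln (a + J) - L))"
    using ineq by (simp only: exp_le_cancel_iff)
  finally show ?thesis by (simp only: xlogx_decay_def a_def J_def of_nat_add)
qed

lemma xlogx_decay_ge:
  assumes "1 \<le> j" "0 \<le> L" "1 \<le> z" "real z \<le> b"
  shows "exp (- (b * ln b)) \<le> xlogx_decay j L z"
proof -
  have "real z / real j * (ln (real z) - L) \<le> real z / real j * ln (real z)"
    using assms by (intro mult_left_mono) auto
  also have "\<dots> \<le> real z * ln (real z)"
    using assms by (intro mult_right_mono) (auto simp: divide_le_eq)
  also have "\<dots> \<le> b * ln b"
    using assms by (intro mult_mono) auto
  finally show ?thesis by (simp add: xlogx_decay_def)
qed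

lemma le_of_ratio_upper_bound:
  fixes p f :: "nat \<Rightarrow> real"
  assumes "1 \<le> j"
    and step: "\<And>x M. N \<le> x \<Longrightarrow> (\<forall>i<j. p (x - i) \<le> M) \<Longrightarrow> p (Suc x) \<le> B / (real x + 1) * M"
    and base: "\<And>z. N \<le> z \<Longrightarrow> z < N + j \<Longrightarrow> p z \<le> f z"
    and antimono: "\<And>y z. N \<le> y \<Longrightarrow> y \<le> z \<Longrightarrow> f z \<le> f y"
    and jump: "\<And>y. N \<le> y \<Longrightarrow> B / (real y + real j) * f y \<le> f (y + j)"
  shows "N \<le> z \<Longrightarrow> p z \<le> f z"
proof (induction z rule: less_induct)
  case (less z)
  show ?case
  proof (cases "z < N + j")
    case False
    define y where "y = z - j"
    have y: "z = y + j" "N \<le> y" using False by (auto simp: y_def)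
    define x where "x = y + j - 1"
    have z: "z = Suc x" and "N \<le> x" using y \<open>1 \<le> j\<close> by (auto simp: x_def)
    have "p (x - i) \<le> f y" if "i < j" for i
    proof -
      have "y \<le> x - i" "x - i < z" using that y z by (auto simp: x_def)
      thus ?thesis using less.IH[of "x - i"] antimono[of y "x - i"] y(2) by simp
    qed
    hence "p z \<le> B / (real x + 1) * f y"
      using step[OF \<open>N \<le> x\<close>] z by blast
    also have "\<dots> \<le> f z"
      using jump[OF y(2)] y \<open>1 \<le> j\<close> by (simp add: x_def of_nat_diff)
    finally show ?thesis .
  qed (use base less.prems in blast)
qed

lemma tailT_le_xlogx_decay:
  fixes p :: "nat \<Rightarrow> real"
  assumes p: "prob_dist p" and j: "1 \<le> j" and "0 < B"
    and step: "\<And>x M. x0 \<le> x \<Longrightarrow> (\<forall>i<j. p (x - i) \<le> M) \<Longrightarrow> p (Suc x) \<le> B / (real x + 1) * M"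
  shows "\<exists>K>0. \<exists>N>1. \<forall>x\<ge>N. tailT p x \<le> K * xlogx_decay j (1 + \<bar>ln B\<bar>) x"
proof -
  define L where "L = 1 + \<bar>ln B\<bar>"
  define N where "N = max x0 (nat \<lceil>exp (L + real j * ln 2)\<rceil> + 1)"
  \<comment> \<open>\<open>K\<close> makes \<open>f \<ge> 1 \<ge> p\<close> on the initial block \<open>N \<le> z < N + j\<close>.\<close>
  define K where "K = exp ((real N + real j) * ln (real N + real j))"
  define f where "f z = K * xlogx_decay j L z" for z
  have L: "1 \<le> L" "ln B + 1 \<le> L" by (auto simp: L_def)
  have K: "0 < K" by (simp add: K_def)
  have "exp (L + real j * ln 2) \<le> real (nat \<lceil>exp (L + real j * ln 2)\<rceil>)"
    by (rule real_nat_ceiling_ge)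
  also have "\<dots> \<le> real N" by (simp add: N_def)
  finally have lnN: "L + real j * ln 2 \<le> ln (real N)"
    by (simp add: N_def ln_ge_iff)
  have lny: "L + real j * ln 2 \<le> ln (real y)" "L \<le> ln (real y)" "0 < y" if "N \<le> y" for y
  proof -
    have "ln (real N) \<le> ln (real y)" "0 < y" using that by (auto simp: N_def)
    moreover have "0 \<le> real j * ln 2" by simp
    ultimately show "L + real j * ln 2 \<le> ln (real y)" "L \<le> ln (real y)" "0 < y"
      using lnN by linarith+
  qed
  have base: "p z \<le> f z" if "N \<le> z" "z < N + j" for z
  proof -
    have "p z \<le> K * exp (- ((real N + real j) * ln (real N + real j)))"
      using prob_dist_le_1[OF p] by (simp add: K_def exp_minus)
    also have "\<dots> \<le> f z"
      unfolding f_def using K L that lny(3)[of N] j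
      by (intro mult_left_mono xlogx_decay_ge) auto
    finally show ?thesis .
  qed
  have antimono: "f z \<le> f y" if "N \<le> y" "y \<le> z" for y z
    unfolding f_def using K lny[OF that(1)] that j
    by (intro mult_left_mono xlogx_decay_antimono) auto
  have jump: "B / (real y + real j) * f y \<le> f (y + j)" if "N \<le> y" for y
  proof -
    have "B / (real y + real j) * xlogx_decay j L y \<le> xlogx_decay j L (y + j)"
      using lny(3)[OF that] by (intro xlogx_decay_jump[OF j _ \<open>0 < B\<close> L(2)]) simp
    hence "K * (B / (real y + real j) * xlogx_decay j L y) \<le> K * xlogx_decay j L (y + j)"
      using K by (intro mult_left_mono) auto
    thus ?thesis unfolding f_def by (simp only: mult.left_commute[of _ K])
  qed
  have le: "p z \<le> f z" if "N \<le> z" for z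
  proof (rule le_of_ratio_upper_bound[OF j _ base antimono jump that])
    show "p (Suc x) \<le> B / (real x + 1) * M" if "N \<le> x" "\<forall>i<j. p (x - i) \<le> M" for x M
      using step[of x M] that by (simp add: N_def)
  qed
  have "tailT p x \<le> 2 * f x" if "N \<le> x" for x
  proof (rule tailT_le_of_halving[OF p])
    show "f (Suc z) \<le> f z / 2" if "x \<le> z" for z
      using xlogx_decay_Suc_le_half[OF j lny(3) lny(1)] \<open>N \<le> x\<close> that K
      by (simp add: f_def)
  qed (use le \<open>N \<le> x\<close> in auto)
  moreover have "1 < N"
  proof -
    have "0 < ln (real N)" using lny(2)[of N] L by simp
    thus ?thesis using lny(3)[of N] by (simp add: ln_gt_zero_iff)
  qed
  ultimately show ?thesis using K unfolding f_def L_def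
    by (intro exI[of _ "2 * K"] conjI exI[of _ N]) (auto simp: mult.assoc)
qed

lemma P1plus_of_ratio_upper_bound:
  fixes p :: "nat \<Rightarrow> real"
  assumes p: "prob_dist p" and "1 \<le> j" "0 < B"
    and "\<And>x M. x0 \<le> x \<Longrightarrow> (\<forall>i<j. p (x - i) \<le> M) \<Longrightarrow> p (Suc x) \<le> B / (real x + 1) * M"
  shows "P1plus (1 / real j) p"
proof -
  define L where "L = 1 + \<bar>ln B\<bar>"
  obtain K N where "0 < K" "1 < N" and tail: "\<And>x. N \<le> x \<Longrightarrow> tailT p x \<le> K * xlogx_decay j L x"
    using tailT_le_xlogx_decay[OF assms] unfolding L_def by blast
  define eps where "eps x = - L / ln (real x)" for x :: nat
  have "eps \<longlonglongrightarrow> 0" unfolding eps_def by real_asymp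
  moreover have "tailT p x \<le> K * exp (- (1 / real j * real x * ln (real x) * (1 + eps x)))"
    if "real N \<le> real x" for x :: nat
  proof -
    have "ln (real x) > 0" using \<open>1 < N\<close> that by simp
    hence "1 / real j * real x * ln (real x) * (1 + eps x) = real x / real j * (ln (real x) - L)"
      using \<open>1 \<le> j\<close> by (simp add: eps_def field_simps)
    hence "exp (- (1 / real j * real x * ln (real x) * (1 + eps x))) = xlogx_decay j L x"
      by (simp add: xlogx_decay_def)
    thus ?thesis using tail[of x] that by (simp only:)
  qed
  hence "lesssim (tailT p) (\<lambda>x. exp (- (1 / real j * real x * ln (real x) * (1 + eps x))))"
    unfolding lesssim_def using \<open>0 < K\<close> \<open>1 < N\<close>
    by (intro exI[of _ K] conjI exI[of _ "real N"]) auto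
  ultimately show ?thesis using p unfolding P1plus_def by blast
qed

lemma mult_pred_mono:
  fixes x y :: nat
  assumes "y \<le> x"
  shows "real y * (real y - 1) \<le> real x * (real x - 1)"
proof (cases "y = 0")
  case True
  thus ?thesis by (cases x) auto
next
  case False
  thus ?thesis using assms by (intro mult_mono) auto
qed

section \<open>The mass-action chain\<close>

locale mass_action_chain =
  fixes k0 km1 k2 k3 :: real and j :: nat and p :: "nat \<Rightarrow> real"
  assumes k0: "0 < k0" and km1: "0 < km1" and k2: "0 < k2" and k3: "0 < k3" and j: "1 \<le> j"
    and stationary: "stationary (crn_rate k0 km1 k2 k3 j) (crn_jumps j) p"
begin

definition down_rate :: "int \<Rightarrow> real" where
  "down_rate z = km1 * of_int z + k3 * of_int z * of_int (z - 1) * of_int (z - 2)"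

definition jump_rate :: "int \<Rightarrow> real" where
  "jump_rate z = k2 * of_int z * of_int (z - 1)"

abbreviation q :: "int \<Rightarrow> real" where
  "q \<equiv> ext0 p"

lemma stationary_prob_dist: "prob_dist p"
  using stationary by (simp add: stationary_def)

lemma q_nonneg: "0 \<le> q z"
  using stationary_prob_dist by (simp add: ext0_def prob_dist_nonneg)

lemma q_neg: "z < 0 \<Longrightarrow> q z = 0"
  by (simp add: ext0_def)

lemma q_of_nat [simp]: "q (int x) = p x"
  by (simp add: ext0_def)

lemma sum_jumps_rate_q:
  "(\<Sum>w\<in>crn_jumps j. crn_rate k0 km1 k2 k3 j w (g w) * q (g w))
     = k0 * q (g 1) + down_rate (g (-1)) * q (g (-1)) + jump_rate (g (int j)) * q (g (int j))"
proof -
  have "crn_rate k0 km1 k2 k3 j w y * q y =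
      (if w = 1 then k0 * q y else 0) + (if w = -1 then down_rate y * q y else 0)
      + (if w = int j then jump_rate y * q y else 0)" for w y
    by (cases "y < 0") (auto simp: crn_rate_def down_rate_def jump_rate_def ext0_def algebra_simps)
  moreover have "finite (crn_jumps j)" by (simp add: crn_jumps_def)
  ultimately show ?thesis
    by (simp add: sum.distrib sum.delta, simp add: crn_jumps_def)
qed

lemma master_equation:
  "k0 * q (int x - 1) + down_rate (int x + 1) * q (int x + 1) + jump_rate (int x - int j) * q (int x - int j)
     = (k0 + down_rate (int x) + jump_rate (int x)) * p x"
proof -
  have "(\<Sum>w\<in>crn_jumps j. crn_rate k0 km1 k2 k3 j w (int x - w) * q (int x - w))
      = (\<Sum>w\<in>crn_jumps j. crn_rate k0 km1 k2 k3 j w (int x)) * p x"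
    using stationary by (simp add: stationary_def)
  also have "\<dots> = (\<Sum>w\<in>crn_jumps j. crn_rate k0 km1 k2 k3 j w ((\<lambda>_. int x) w) * q ((\<lambda>_. int x) w))"
    by (simp add: sum_distrib_right)
  finally show ?thesis
    unfolding sum_jumps_rate_q[of "\<lambda>w. int x - w"] sum_jumps_rate_q[of "\<lambda>_. int x"]
    by (simp add: algebra_simps)
qed

lemma jump_flux_nonneg: "0 \<le> jump_rate z * q z"
proof (cases "z < 0")
  case False
  hence "0 \<le> z * (z - 1)" by (cases "z = 0") auto
  hence "0 \<le> (of_int (z * (z - 1)) :: real)" by (simp only: of_int_0_le_iff)
  hence "0 \<le> k2 * of_int (z * (z - 1)) * q z"
    using k2 q_nonneg[of z] by (intro mult_nonneg_nonneg) auto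
  thus ?thesis by (simp add: jump_rate_def)
qed (simp add: q_neg)

text \<open>Downward minus upward probability flux across the cut between \<open>z\<close> and \<open>z + 1\<close>; the master
  equation says it is the same for every cut, and it vanishes below the state space.\<close>
definition net_flux :: "int \<Rightarrow> real" where
  "net_flux z = down_rate (z + 1) * q (z + 1) - k0 * q z - (\<Sum>i<j. jump_rate (z - int i) * q (z - int i))"

lemma net_flux_zero: "net_flux (int x - 1) = 0"
proof (induction x)
  case 0
  have "down_rate 0 = 0" by (simp add: down_rate_def)
  thus ?case by (simp add: net_flux_def q_neg)
next
  case (Suc x)
  have telescope: "(\<Sum>i<n. h (z - int i)) - (\<Sum>i<n. h (z - 1 - int i)) = h z - h (z - int n)"
    for n and h :: "int \<Rightarrow> real" and z
    by (induction n) (simp_all add: algebra_simps)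
  have "net_flux (int x) = net_flux (int x - 1)"
    using master_equation[of x] telescope[of "\<lambda>z. jump_rate z * q z" "int x" j]
    by (simp add: net_flux_def algebra_simps)
  with Suc show ?case by simp
qed

lemma flux_balance:
  "down_rate (int x + 1) * p (Suc x) = k0 * p x + (\<Sum>i<j. jump_rate (int x - int i) * q (int x - int i))"
  using net_flux_zero[of "Suc x"] q_of_nat[of "Suc x"] by (simp add: net_flux_def add.commute)

lemma down_rate_of_nat: "down_rate (int x + 1) = km1 * (real x + 1) + k3 * (real x + 1) * (real x * (real x - 1))"
  by (simp add: down_rate_def algebra_simps)

lemma jump_rate_of_nat: "jump_rate (int x) = k2 * (real x * (real x - 1))"
  by (simp add: jump_rate_def)

lemma down_rate_pos: "0 < down_rate (int x + 1)"
proof -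
  have "0 \<le> k3 * (real x + 1) * (real x * (real x - 1))"
    using k3 mult_pred_mono[of 0 x] by simp
  thus ?thesis unfolding down_rate_of_nat using km1 by (simp add: add_pos_nonneg)
qed

lemma jump_flux_le_flux: "i < j \<Longrightarrow> jump_rate (int x - int i) * q (int x - int i) \<le> down_rate (int x + 1) * p (Suc x)"
  unfolding flux_balance using k0 prob_dist_nonneg[OF stationary_prob_dist, of x] jump_flux_nonneg
  by (intro add_increasing member_le_sum) auto

lemma p_Suc_pos: "0 < p x \<Longrightarrow> 0 < p (Suc x)"
proof -
  assume "0 < p x"
  hence "0 < down_rate (int x + 1) * p (Suc x)"
    unfolding flux_balance using k0 jump_flux_nonneg by (intro add_pos_nonneg sum_nonneg) auto
  thus ?thesis using down_rate_pos[of x] by (simp add: zero_less_mult_iff)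
qed

lemma exists_pos_ge_2: "\<exists>m\<ge>2. 0 < p m"
proof -
  have "p \<noteq> (\<lambda>_. 0)"
  proof
    assume "p = (\<lambda>_. 0)"
    hence "(\<lambda>_. 0 :: real) sums 1" using stationary_prob_dist by (simp add: prob_dist_def)
    thus False using sums_zero sums_unique2 by fastforce
  qed
  then obtain m where "p m \<noteq> 0" by blast
  hence "0 < p m" using prob_dist_nonneg[OF stationary_prob_dist, of m] by simp
  hence "0 < p (Suc (Suc m))" by (intro p_Suc_pos)
  thus ?thesis by (intro exI[of _ "Suc (Suc m)"]) auto
qed

lemma ratio_lower_bound:
  assumes "2 \<le> x"
  shows "k2 / (km1 + k3) / (real x + 1) * p x \<le> p (Suc x)"
proof -
  define d where "d = real x * (real x - 1)"
  have d: "1 \<le> d" using assms mult_mono[of 1 "real x" 1 "real x - 1"] by (simp add: d_def)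
  have "d * (k2 * p x) = jump_rate (int x) * q (int x)"
    by (simp add: jump_rate_of_nat d_def)
  also have "\<dots> \<le> down_rate (int x + 1) * p (Suc x)"
    using jump_flux_le_flux[of 0] j by simp
  also have "\<dots> \<le> d * (p (Suc x) * ((km1 + k3) * (real x + 1)))"
  proof -
    have "km1 * (real x + 1) \<le> km1 * (real x + 1) * d" using km1 d by simp
    hence "down_rate (int x + 1) \<le> (km1 + k3) * (real x + 1) * d"
      unfolding down_rate_of_nat d_def[symmetric] by (simp add: algebra_simps)
    from mult_right_mono[OF this prob_dist_nonneg[OF stationary_prob_dist, of "Suc x"]]
    show ?thesis by (simp add: ac_simps)
  qed
  finally have "k2 * p x \<le> p (Suc x) * ((km1 + k3) * (real x + 1))"
    by (rule mult_left_le_imp_le) (use d in simp)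
  moreover have "0 < (km1 + k3) * (real x + 1)" using km1 k3 by simp
  ultimately have "k2 * p x / ((km1 + k3) * (real x + 1)) \<le> p (Suc x)"
    by (simp add: pos_divide_le_eq)
  thus ?thesis by simp
qed

lemma ratio_upper_bound:
  assumes "2 \<le> x" and M: "\<forall>i<j. p (x - i) \<le> M"
  shows "p (Suc x) \<le> (k0 + real j * k2) / k3 / (real x + 1) * M"
proof -
  define d where "d = real x * (real x - 1)"
  have d: "1 \<le> d" using assms mult_mono[of 1 "real x" 1 "real x - 1"] by (simp add: d_def)
  have "0 \<le> M" using M j prob_dist_nonneg[OF stationary_prob_dist, of x] by force
  have jump_term: "jump_rate (int x - int i) * q (int x - int i) \<le> k2 * d * M" if "i < j" for i
  proof (cases "i \<le> x")
    case True
    hence "jump_rate (int x - int i) * q (int x - int i) = k2 * (real (x - i) * (real (x - i) - 1)) * p (x - i)"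
      by (simp add: jump_rate_of_nat flip: of_nat_diff)
    also have "\<dots> \<le> k2 * d * M"
    proof (rule mult_mono)
      show "k2 * (real (x - i) * (real (x - i) - 1)) \<le> k2 * d"
        using k2 mult_pred_mono[of "x - i" x] by (simp add: d_def)
    qed (use M that k2 d prob_dist_nonneg[OF stationary_prob_dist] in auto)
    finally show ?thesis .
  qed (use k2 d \<open>0 \<le> M\<close> q_neg in auto)
  have "d * (k3 * (real x + 1) * p (Suc x)) \<le> down_rate (int x + 1) * p (Suc x)"
    unfolding down_rate_of_nat d_def using km1 prob_dist_nonneg[OF stationary_prob_dist, of "Suc x"]
    by (simp add: algebra_simps)
  also have "\<dots> \<le> k0 * M + real j * (k2 * d * M)"
    unfolding flux_balance using M j k0 sum_mono[of "{..<j}", OF jump_term]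
    by (intro add_mono mult_left_mono) auto
  also have "\<dots> \<le> d * ((k0 + real j * k2) * M)"
    using mult_right_mono[OF d, of "k0 * M"] k0 \<open>0 \<le> M\<close> by (simp add: algebra_simps)
  finally have "k3 * (real x + 1) * p (Suc x) \<le> (k0 + real j * k2) * M"
    by (rule mult_left_le_imp_le) (use d in simp)
  moreover have "0 < k3 * (real x + 1)" using k3 by simp
  ultimately have "p (Suc x) \<le> (k0 + real j * k2) * M / (k3 * (real x + 1))"
    by (simp add: pos_le_divide_eq mult.commute)
  thus ?thesis by simp
qed

end

theorem mainTheorem11:
  fixes k0 km1 k2 k3 :: real and j :: nat and p :: "nat \<Rightarrow> real"
  assumes "k0 > 0" "km1 > 0" "k2 > 0" "k3 > 0" "j \<ge> 1"
    and "stationary (crn_rate k0 km1 k2 k3 j) (crn_jumps j) p"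
  shows "P1plus (1 / real j) p \<and> P1minus 1 p"
proof -
  interpret mass_action_chain k0 km1 k2 k3 j p
    using assms by unfold_locales auto
  obtain m where "2 \<le> m" "0 < p m" using exists_pos_ge_2 by blast
  have "P1minus 1 p"
    using \<open>0 < p m\<close> \<open>2 \<le> m\<close> ratio_lower_bound assms
    by (intro P1minus_of_ratio_lower_bound[OF stationary_prob_dist, of "k2 / (km1 + k3)"]) auto
  moreover have "P1plus (1 / real j) p"
    using ratio_upper_bound assms add_pos_nonneg[of k0 "real j * k2"]
    by (intro P1plus_of_ratio_upper_bound[OF stationary_prob_dist, of _ "(k0 + real j * k2) / k3" 2]) auto
  ultimately show ?thesis by blast
qed

end
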